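(* Let $G$ be a connected graph with $N$ vertices and maximum degree $\Delta$, let $k,R$ be positive integers with $N>2k(\Delta^{4R}+1)$, and let $H$ be a $k$-local operator (not necessarily Hermitian) of range at most $R$ on the qubits at the vertices of $G$. If $H|W^p\rangle=E_p|W^p\rangle$ with $E_p\in\mathbb{C}$ for all $p\in\{0,1,\dots,N\}$, then there exist constants $\Omega,\omega\in\mathbb{C}$ with $E_p=\Omega+\omega p$ for all $p\in\{0,1,\dots,N\}$.
   Context: System of $N$ qubits on the vertices of a graph $G$ with local basis $|0\rangle,|1\rangle$. For each vertex $i$, $s_i^\dagger$ acts on $i$ as $s^\dagger|0\rangle=|1\rangle$, $s^\dagger|1\rangle=0$, $s_i=(s_i^\dagger)^\dagger$; $|\overline 0\rangle=|0\rangle^{\otimes N}$. Distances are graph distances. Every operator has a unique expansion in normal-ordered strings $s^\dagger_{j_1}\cdots s^\dagger_{j_n}s_{k_1}\cdots s_{k_m}$ (the $j$'s pairwise distinct, the $k$'s pairwise distinct, overlaps allowed), whose sites are $\{j_1,\dots,j_n,k_1,\dots,k_m\}$. A string has range $R$, where $R$ is the smallest positive integer with all pairwise distances between its sites $<R$; an operator has range at most $R$ if every string with nonzero coefficient has range at most $R$, and is $k$-local if every such string involves at most $k$ distinct sites. $S^\dagger=\sum_i s_i^\dagger$ and $|W^p\rangle$ is the normalization of $(S^\dagger)^p|\overline 0\rangle$ for $p=0,\dots,N$. *)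

theory Defs
  imports Complex_Main
begin

definition simple_graph :: "'a set \<Rightarrow> ('a \<Rightarrow> 'a \<Rightarrow> bool) \<Rightarrow> bool" where
  "simple_graph V E \<longleftrightarrow> finite V \<and> (\<forall>u v. E u v \<longrightarrow> u \<in> V \<and> v \<in> V)
     \<and> (\<forall>u v. E u v \<longrightarrow> E v u) \<and> (\<forall>u. \<not> E u u)"

definition connected_graph :: "'a set \<Rightarrow> ('a \<Rightarrow> 'a \<Rightarrow> bool) \<Rightarrow> bool" where
  "connected_graph V E \<longleftrightarrow> (\<forall>u\<in>V. \<forall>v\<in>V. \<exists>n. (E ^^ n) u v)"

definition gdist :: "('a \<Rightarrow> 'a \<Rightarrow> bool) \<Rightarrow> 'a \<Rightarrow> 'a \<Rightarrow> nat" where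
  "gdist E u v = (LEAST n. (E ^^ n) u v)"

definition max_degree :: "'a set \<Rightarrow> ('a \<Rightarrow> 'a \<Rightarrow> bool) \<Rightarrow> nat" where
  "max_degree V E = Max ((\<lambda>v. card {w. E v w}) ` V)"

definition string_range :: "('a \<Rightarrow> 'a \<Rightarrow> bool) \<Rightarrow> 'a set \<Rightarrow> nat" where
  "string_range E S = (LEAST R. 0 < R \<and> (\<forall>i\<in>S. \<forall>j\<in>S. gdist E i j < R))"

text \<open>Computational basis states are indexed by the set of sites in state 1.
  Operators are matrices (first argument: output/row state, second: input/column state);
  vectors are functions from basis states to complex amplitudes.  Only subsets of V matter.\<close>

definition apply_op :: "'a set \<Rightarrow> ('a set \<Rightarrow> 'a set \<Rightarrow> complex) \<Rightarrow> ('a set \<Rightarrow> complex) \<Rightarrow> ('a set \<Rightarrow> complex)" where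
  "apply_op V M \<psi> = (\<lambda>y. \<Sum>x\<in>Pow V. M y x * \<psi> x)"

text \<open>Matrix of the normal-ordered string  (prod_{j in J} s_j^dagger)(prod_{k in K} s_k):
  first annihilate all sites of K (requires them to be 1), then create all sites of J
  (requires them to be 0).\<close>
definition nstring :: "'a set \<Rightarrow> 'a set \<Rightarrow> 'a set \<Rightarrow> 'a set \<Rightarrow> complex" where
  "nstring J K y x = (if K \<subseteq> x \<and> J \<inter> (x - K) = {} \<and> y = (x - K) \<union> J then 1 else 0)"

definition local_op :: "'a set \<Rightarrow> ('a \<Rightarrow> 'a \<Rightarrow> bool) \<Rightarrow> nat \<Rightarrow> nat \<Rightarrow> ('a set \<Rightarrow> 'a set \<Rightarrow> complex) \<Rightarrow> bool" where
  "local_op V E k R H \<longleftrightarrow>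
     (\<exists>c :: 'a set \<Rightarrow> 'a set \<Rightarrow> complex.
        (\<forall>J K. c J K \<noteq> 0 \<longrightarrow> J \<subseteq> V \<and> K \<subseteq> V \<and> card (J \<union> K) \<le> k
                            \<and> string_range E (J \<union> K) \<le> R)
      \<and> (\<forall>y x. y \<subseteq> V \<longrightarrow> x \<subseteq> V \<longrightarrow>
            H y x = (\<Sum>J\<in>Pow V. \<Sum>K\<in>Pow V. c J K * nstring J K y x)))"

definition Sdag :: "'a set \<Rightarrow> 'a set \<Rightarrow> 'a set \<Rightarrow> complex" where
  "Sdag V = (\<lambda>y x. \<Sum>v\<in>V. nstring {v} {} y x)"

definition vac :: "'a set \<Rightarrow> complex" where
  "vac = (\<lambda>x. if x = {} then 1 else 0)"

definition vnorm :: "'a set \<Rightarrow> ('a set \<Rightarrow> complex) \<Rightarrow> real" where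
  "vnorm V \<psi> = sqrt (\<Sum>x\<in>Pow V. (cmod (\<psi> x))\<^sup>2)"

definition Wstate :: "'a set \<Rightarrow> nat \<Rightarrow> 'a set \<Rightarrow> complex" where
  "Wstate V p = (let \<phi> = (apply_op V (Sdag V) ^^ p) vac
                 in (\<lambda>x. \<phi> x / complex_of_real (vnorm V \<phi>)))"

end

theory Submission
  imports Defs
begin

text \<open>
  W^p is the uniform superposition of the basis states with p excitations, so the eigenvalue
  equation says: for every basis state y with |y| = p, the entries of row y of H, summed over
  the columns with p excitations, add up to E_p.  In the expansion of H into normal-ordered
  strings, the contribution of a string to this row sum does not change when a site outside
  the string is excited.  Because N is large compared with the number of vertices within distance R
  of a vertex, there are vertices u, v at distance at least R, and no string of H contains both.
  Hence for y avoiding u and v the second difference of the row sums at y + u + v, y + u,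
  y + v and y vanishes, i.e. E_{p+2} - 2 E_{p+1} + E_p = 0, so E_p is affine in p.
\<close>

lemma
  assumes "simple_graph V E"
  shows finite_neighbours: "finite {x. E w x}"
    and card_neighbours_le_max_degree: "card {x. E w x} \<le> max_degree V E"
proof -
  have fin: "finite V" and edge: "\<And>u v. E u v \<Longrightarrow> u \<in> V \<and> v \<in> V"
    using assms unfolding simple_graph_def by auto
  show "finite {x. E w x}" by (rule finite_subset[OF _ fin]) (auto dest: edge)
  show "card {x. E w x} \<le> max_degree V E"
  proof (cases "w \<in> V")
    case True
    then show ?thesis unfolding max_degree_def using fin by (auto intro: Max_ge)
  next
    case False
    then have "{x. E w x} = {}" using edge by auto
    then show ?thesis by simp
  qed
qed

lemma finite_walk_targets:
  assumes "simple_graph V E"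
  shows "finite {v. (E ^^ n) u v}"
proof (cases n)
  case (Suc m)
  have "{v. (E ^^ n) u v} \<subseteq> V" using assms unfolding Suc simple_graph_def by auto
  then show ?thesis using assms unfolding simple_graph_def by (auto intro: finite_subset)
qed simp

lemma card_walk_targets_le:
  assumes "simple_graph V E"
  shows "card {v. (E ^^ n) u v} \<le> max_degree V E ^ n"
proof (induction n)
  case (Suc n)
  have "{v. (E ^^ Suc n) u v} = (\<Union>w\<in>{v. (E ^^ n) u v}. {x. E w x})" by auto
  then have "card {v. (E ^^ Suc n) u v} \<le> (\<Sum>w\<in>{v. (E ^^ n) u v}. card {x. E w x})"
    using card_UN_le[OF finite_walk_targets[OF assms]] by simp
  also have "\<dots> \<le> (\<Sum>w\<in>{v. (E ^^ n) u v}. max_degree V E)"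
    by (intro sum_mono card_neighbours_le_max_degree[OF assms])
  also have "\<dots> \<le> max_degree V E ^ Suc n" using Suc by (simp add: mult.commute)
  finally show ?case .
qed simp

lemma walk_target_max_degree_le_1:
  assumes "simple_graph V E" and "max_degree V E \<le> 1" and "(E ^^ n) u v"
  shows "v = u \<or> E u v"
  using assms(3)
proof (induction n arbitrary: v)
  case (Suc n)
  then obtain w where w: "w = u \<or> E u w" and "E w v" by auto
  show ?case
  proof (cases "w = u")
    case False
    then have "E w u" using w assms(1) unfolding simple_graph_def by blast
    have "card {x. E w x} \<le> 1"
      using card_neighbours_le_max_degree[OF assms(1)] assms(2) order_trans by blast
    then have "v = u"
      using finite_neighbours[OF assms(1)] \<open>E w u\<close> \<open>E w v\<close> card_le_Suc0_iff_eq by fastforce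
    then show ?thesis by simp
  qed (use \<open>E w v\<close> in simp)
qed simp

lemma card_le_2_if_max_degree_le_1:
  assumes "simple_graph V E" and "connected_graph V E" and "max_degree V E \<le> 1"
  shows "card V \<le> 2"
proof (cases "V = {}")
  case False
  then obtain u where u: "u \<in> V" by auto
  have "V \<subseteq> insert u {v. E u v}"
  proof
    fix v assume "v \<in> V"
    then obtain n where "(E ^^ n) u v" using assms(2) u unfolding connected_graph_def by blast
    then show "v \<in> insert u {v. E u v}"
      using walk_target_max_degree_le_1[OF assms(1,3)] by auto
  qed
  moreover have "finite (insert u {v. E u v})" using finite_neighbours[OF assms(1)] by simp
  ultimately have "card V \<le> card (insert u {v. E u v})" by (rule card_mono[rotated])
  also have "\<dots> \<le> Suc (card {v. E u v})"
    using finite_neighbours[OF assms(1)] by (simp add: card_insert_if)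
  also have "\<dots> \<le> 2" using card_neighbours_le_max_degree[OF assms(1), of u] assms(3) by simp
  finally show ?thesis .
qed simp

lemma relpowp_gdist:
  assumes "(E ^^ n) u v"
  shows "(E ^^ gdist E u v) u v"
  using assms unfolding gdist_def by (rule LeastI)

lemma gdist_self [simp]: "gdist E u u = 0"
  unfolding gdist_def by simp

lemma card_ball_le:
  assumes "simple_graph V E" and "connected_graph V E" and "u \<in> V"
  shows "card {v \<in> V. gdist E u v < r} \<le> (\<Sum>n<r. max_degree V E ^ n)"
proof -
  have "{v \<in> V. gdist E u v < r} \<subseteq> (\<Union>n<r. {v. (E ^^ n) u v})"
  proof
    fix v assume v: "v \<in> {v \<in> V. gdist E u v < r}"
    then obtain n where "(E ^^ n) u v" using assms(2,3) unfolding connected_graph_def by blast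
    then have "(E ^^ gdist E u v) u v" by (rule relpowp_gdist)
    then show "v \<in> (\<Union>n<r. {v. (E ^^ n) u v})" using v by blast
  qed
  then have "card {v \<in> V. gdist E u v < r} \<le> card (\<Union>n<r. {v. (E ^^ n) u v})"
    using finite_walk_targets[OF assms(1)] by (intro card_mono) auto
  also have "\<dots> \<le> (\<Sum>n<r. card {v. (E ^^ n) u v})" by (rule card_UN_le) simp
  also have "\<dots> \<le> (\<Sum>n<r. max_degree V E ^ n)"
    by (intro sum_mono card_walk_targets_le[OF assms(1)])
  finally show ?thesis .
qed

lemma sum_powers_lessThan_le_power:
  assumes "2 \<le> (d :: nat)"
  shows "(\<Sum>n<r. d ^ n) \<le> d ^ r"
proof (induction r)
  case (Suc r)
  then have "(\<Sum>n<Suc r. d ^ n) \<le> 2 * d ^ r" by simp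
  also have "\<dots> \<le> d ^ Suc r" using assms by simp
  finally show ?case .
qed simp

lemma exists_far_pair:
  assumes "simple_graph V E" and "connected_graph V E"
    and "2 < card V" and "max_degree V E ^ r < card V"
  shows "\<exists>u\<in>V. \<exists>v\<in>V. r \<le> gdist E u v"
proof (rule ccontr)
  assume "\<not> ?thesis"
  obtain u where u: "u \<in> V" using assms(3) by (metis all_not_in_conv card.empty not_less_zero)
  with \<open>\<not> ?thesis\<close> have "{v \<in> V. gdist E u v < r} = V" by (auto simp: not_le)
  then have "card V \<le> (\<Sum>n<r. max_degree V E ^ n)"
    using card_ball_le[OF assms(1,2) u, of r] by simp
  moreover have "2 \<le> max_degree V E"
    using card_le_2_if_max_degree_le_1[OF assms(1,2)] assms(3) by linarith
  ultimately show False
    using sum_powers_lessThan_le_power[of "max_degree V E" r] assms(4) by linarith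
qed

lemma nstring_eq:
  "nstring J K y x = (if x = (y - J) \<union> K \<and> J \<subseteq> y \<and> K \<inter> y \<subseteq> J then 1 else 0)"
proof -
  have "(K \<subseteq> x \<and> J \<inter> (x - K) = {} \<and> y = (x - K) \<union> J) \<longleftrightarrow>
        (x = (y - J) \<union> K \<and> J \<subseteq> y \<and> K \<inter> y \<subseteq> J)"
    by blast
  then show ?thesis unfolding nstring_def by simp
qed

lemma apply_Sdag:
  assumes "finite V"
  shows "apply_op V (Sdag V) \<psi> y = (if y \<subseteq> V then (\<Sum>v\<in>y. \<psi> (y - {v})) else 0)"
proof -
  have "apply_op V (Sdag V) \<psi> y
      = (\<Sum>x\<in>Pow V. \<Sum>v\<in>V. if x = y - {v} then (if v \<in> y then \<psi> x else 0) else 0)"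
    unfolding apply_op_def Sdag_def
    by (intro sum.cong refl) (auto simp: sum_distrib_right nstring_eq intro!: sum.cong)
  also have "\<dots> = (\<Sum>v\<in>V. \<Sum>x\<in>Pow V. if x = y - {v} then (if v \<in> y then \<psi> x else 0) else 0)"
    by (rule sum.swap)
  also have "\<dots> = (\<Sum>v\<in>V. if y - {v} \<subseteq> V \<and> v \<in> y then \<psi> (y - {v}) else 0)"
    using assms by (intro sum.cong refl) (simp add: sum.delta')
  also have "\<dots> = (if y \<subseteq> V then (\<Sum>v\<in>y. \<psi> (y - {v})) else 0)"
  proof (cases "y \<subseteq> V")
    case True
    then have "(\<Sum>v\<in>V. if y - {v} \<subseteq> V \<and> v \<in> y then \<psi> (y - {v}) else 0)
        = (\<Sum>v\<in>V. if v \<in> y then \<psi> (y - {v}) else 0)"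
      by (intro sum.cong) auto
    also have "\<dots> = (\<Sum>v\<in>{v\<in>V. v \<in> y}. \<psi> (y - {v}))"
      using assms by (simp add: sum.inter_filter)
    also have "{v\<in>V. v \<in> y} = y" using True by blast
    finally show ?thesis using True by simp
  next
    case False
    then have "\<not> y - {v} \<subseteq> V" if "v \<in> V" for v using that by blast
    then show ?thesis using False by simp
  qed
  finally show ?thesis .
qed

lemma Sdag_power_vac:
  assumes "finite V"
  shows "(apply_op V (Sdag V) ^^ p) vac y = (if y \<subseteq> V \<and> card y = p then fact p else 0)"
proof (induction p arbitrary: y)
  case 0
  have "y \<subseteq> V \<Longrightarrow> finite y" using assms finite_subset by blast
  then show ?case by (auto simp: vac_def)
next
  case (Suc p)
  show ?case
  proof (cases "y \<subseteq> V")
    case True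
    then have "finite y" using assms finite_subset by blast
    have "(apply_op V (Sdag V) ^^ Suc p) vac y = (\<Sum>v\<in>y. (apply_op V (Sdag V) ^^ p) vac (y - {v}))"
      using apply_Sdag[OF assms] True by simp
    also have "\<dots> = (\<Sum>v\<in>y. if card y = Suc p then fact p else 0)"
    proof (intro sum.cong refl)
      fix v assume "v \<in> y"
      then have "card (y - {v}) = p \<longleftrightarrow> card y = Suc p"
        using \<open>finite y\<close> card_Suc_Diff1 by fastforce
      then show "(apply_op V (Sdag V) ^^ p) vac (y - {v}) = (if card y = Suc p then fact p else 0)"
        using Suc.IH True by auto
    qed
    also have "\<dots> = (if y \<subseteq> V \<and> card y = Suc p then fact (Suc p) else 0)"
      using True by simp
    finally show ?thesis .
  qed (simp add: apply_Sdag[OF assms])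
qed

lemma Wstate_uniform:
  assumes "finite V" and "p \<le> card V"
  obtains \<beta> where "\<beta> \<noteq> 0" and "\<And>y. Wstate V p y = (if y \<subseteq> V \<and> card y = p then \<beta> else 0)"
proof -
  define \<phi> where "\<phi> = (apply_op V (Sdag V) ^^ p) vac"
  have \<phi>: "\<And>y. \<phi> y = (if y \<subseteq> V \<and> card y = p then fact p else 0)"
    unfolding \<phi>_def by (rule Sdag_power_vac[OF assms(1)])
  obtain y0 where y0: "y0 \<subseteq> V" "card y0 = p" using obtain_subset_with_card_n[OF assms(2)] by metis
  have "0 < (cmod (\<phi> y0))\<^sup>2" using \<phi> y0 by simp
  also have "\<dots> \<le> (\<Sum>x\<in>Pow V. (cmod (\<phi> x))\<^sup>2)" using y0 assms(1) by (intro member_le_sum) auto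
  finally have "vnorm V \<phi> \<noteq> 0" unfolding vnorm_def by simp
  then show ?thesis
    by (intro that[of "fact p / complex_of_real (vnorm V \<phi>)"])
      (auto simp: Wstate_def \<phi>_def[symmetric] \<phi>)
qed

definition sector_row_sum :: "'a set \<Rightarrow> ('a set \<Rightarrow> 'a set \<Rightarrow> complex) \<Rightarrow> 'a set \<Rightarrow> complex" where
  "sector_row_sum V M y = (\<Sum>x \<in> {x \<in> Pow V. card x = card y}. M y x)"

lemma sector_row_sum_eq_eigenvalue:
  assumes "finite V" and "p \<le> card V"
    and eigen: "\<forall>y \<subseteq> V. apply_op V M (Wstate V p) y = e * Wstate V p y"
    and "y \<subseteq> V" and "card y = p"
  shows "sector_row_sum V M y = e"
proof -
  obtain \<beta> where "\<beta> \<noteq> 0" and W: "\<And>y. Wstate V p y = (if y \<subseteq> V \<and> card y = p then \<beta> else 0)"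
    using Wstate_uniform[OF assms(1,2)] by blast
  have "apply_op V M (Wstate V p) y = (\<Sum>x\<in>Pow V. if card x = p then M y x * \<beta> else 0)"
    unfolding apply_op_def W by (intro sum.cong refl) auto
  also have "\<dots> = (\<Sum>x\<in>{x \<in> Pow V. card x = p}. M y x * \<beta>)"
    using assms(1) by (intro sum.inter_filter[symmetric]) simp
  also have "\<dots> = sector_row_sum V M y * \<beta>"
    using assms(5) by (simp add: sector_row_sum_def sum_distrib_right)
  finally have "sector_row_sum V M y * \<beta> = e * \<beta>"
    using eigen assms(4,5) W by auto
  then show ?thesis using \<open>\<beta> \<noteq> 0\<close> by simp
qed

lemma sector_row_sum_expansion:
  assumes "finite V"
    and "\<forall>y x. y \<subseteq> V \<longrightarrow> x \<subseteq> V \<longrightarrow> M y x = (\<Sum>J\<in>Pow V. \<Sum>K\<in>Pow V. c J K * nstring J K y x)"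
    and "y \<subseteq> V"
  shows "sector_row_sum V M y = (\<Sum>J\<in>Pow V. \<Sum>K\<in>Pow V. c J K * sector_row_sum V (nstring J K) y)"
proof -
  let ?X = "{x \<in> Pow V. card x = card y}"
  have "sector_row_sum V M y = (\<Sum>x\<in>?X. \<Sum>J\<in>Pow V. \<Sum>K\<in>Pow V. c J K * nstring J K y x)"
    unfolding sector_row_sum_def using assms(2,3) by (intro sum.cong refl) auto
  also have "\<dots> = (\<Sum>J\<in>Pow V. \<Sum>K\<in>Pow V. \<Sum>x\<in>?X. c J K * nstring J K y x)"
    by (subst sum.swap) (intro sum.cong refl sum.swap)
  finally show ?thesis by (simp add: sector_row_sum_def sum_distrib_left)
qed

lemma sector_row_sum_nstring:
  assumes "finite V"
  shows "sector_row_sum V (nstring J K) y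
    = (if J \<subseteq> y \<and> K \<inter> y \<subseteq> J \<and> (y - J) \<union> K \<subseteq> V \<and> card ((y - J) \<union> K) = card y then 1 else 0)"
proof -
  let ?X = "{x \<in> Pow V. card x = card y}"
  have "sector_row_sum V (nstring J K) y
      = (\<Sum>x\<in>?X. if x = (y - J) \<union> K then (if J \<subseteq> y \<and> K \<inter> y \<subseteq> J then 1 else 0) else 0)"
    unfolding sector_row_sum_def nstring_eq by (intro sum.cong) auto
  also have "\<dots> = (if (y - J) \<union> K \<in> ?X then (if J \<subseteq> y \<and> K \<inter> y \<subseteq> J then 1 else 0) else 0)"
    using assms by (intro sum.delta) simp
  finally show ?thesis by auto
qed

lemma sector_row_sum_nstring_insert:
  assumes "finite V" and "u \<in> V" and "u \<notin> J \<union> K" and "y \<subseteq> V" and "u \<notin> y"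
  shows "sector_row_sum V (nstring J K) (insert u y) = sector_row_sum V (nstring J K) y"
proof -
  have "finite y" using assms(1,4) finite_subset by blast
  have "insert u y - J \<union> K = insert u (y - J \<union> K)" using assms(3) by blast
  moreover have "finite (y - J \<union> K)" if "y - J \<union> K \<subseteq> V" using that assms(1) finite_subset by blast
  ultimately show ?thesis
    using assms(2-5) \<open>finite y\<close> by (auto simp: sector_row_sum_nstring[OF assms(1)])
qed

lemma gdist_less_string_range:
  assumes "finite S" and "i \<in> S" and "j \<in> S"
  shows "gdist E i j < string_range E S"
proof -
  define B where "B = Suc (\<Sum>a\<in>S. \<Sum>b\<in>S. gdist E a b)"
  have "gdist E a b < B" if "a \<in> S" "b \<in> S" for a b
  proof -
    have "gdist E a b \<le> (\<Sum>b'\<in>S. gdist E a b')" using that assms(1) by (intro member_le_sum) auto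
    also have "\<dots> \<le> (\<Sum>a'\<in>S. \<Sum>b'\<in>S. gdist E a' b')" using that assms(1) by (intro member_le_sum) auto
    finally show ?thesis unfolding B_def by simp
  qed
  then have "0 < B \<and> (\<forall>a\<in>S. \<forall>b\<in>S. gdist E a b < B)" unfolding B_def by simp
  then have "0 < string_range E S \<and> (\<forall>a\<in>S. \<forall>b\<in>S. gdist E a b < string_range E S)"
    unfolding string_range_def by (rule LeastI)
  then show ?thesis using assms(2,3) by blast
qed

lemma sector_row_sum_second_difference:
  assumes "finite V" and "local_op V E k R H"
    and "u \<in> V" and "v \<in> V" and "u \<noteq> v" and "R \<le> gdist E u v"
    and "y \<subseteq> V" and "u \<notin> y" and "v \<notin> y"
  shows "sector_row_sum V H (insert u (insert v y)) - sector_row_sum V H (insert u y)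
       - sector_row_sum V H (insert v y) + sector_row_sum V H y = 0"
proof -
  obtain c where c: "\<forall>J K. c J K \<noteq> 0 \<longrightarrow>
      J \<subseteq> V \<and> K \<subseteq> V \<and> card (J \<union> K) \<le> k \<and> string_range E (J \<union> K) \<le> R"
    and H: "\<forall>y x. y \<subseteq> V \<longrightarrow> x \<subseteq> V \<longrightarrow> H y x = (\<Sum>J\<in>Pow V. \<Sum>K\<in>Pow V. c J K * nstring J K y x)"
    using assms(2) unfolding local_op_def by blast
  let ?S = "\<lambda>J K. sector_row_sum V (nstring J K)"
  have term_vanishes:
    "c J K * (?S J K (insert u (insert v y)) - ?S J K (insert u y) - ?S J K (insert v y) + ?S J K y) = 0"
    for J K
  proof (cases "c J K = 0")
    case False
    then have "J \<union> K \<subseteq> V" and "string_range E (J \<union> K) \<le> R" using c by blast+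
    then have "finite (J \<union> K)" and "string_range E (J \<union> K) \<le> R"
      using assms(1) finite_subset by auto
    then have "u \<notin> J \<union> K \<or> v \<notin> J \<union> K"
      using gdist_less_string_range[of "J \<union> K" u v E] assms(6) by auto
    then show ?thesis
    proof
      assume "u \<notin> J \<union> K"
      then have "?S J K (insert u (insert v y)) = ?S J K (insert v y)" "?S J K (insert u y) = ?S J K y"
        using sector_row_sum_nstring_insert[OF assms(1,3)] assms(4,5,7-9) by auto
      then show ?thesis by simp
    next
      assume "v \<notin> J \<union> K"
      then have "?S J K (insert v (insert u y)) = ?S J K (insert u y)" "?S J K (insert v y) = ?S J K y"
        using sector_row_sum_nstring_insert[OF assms(1,4)] assms(3,5,7-9) by auto
      then show ?thesis by (simp add: insert_commute)
    qed
  qed simp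
  have "(\<Sum>J\<in>Pow V. \<Sum>K\<in>Pow V. c J K * (?S J K (insert u (insert v y)) - ?S J K (insert u y)
      - ?S J K (insert v y) + ?S J K y)) = 0"
    by (simp only: term_vanishes sum.neutral_const)
  moreover have "sector_row_sum V H z = (\<Sum>J\<in>Pow V. \<Sum>K\<in>Pow V. c J K * ?S J K z)" if "z \<subseteq> V" for z
    by (rule sector_row_sum_expansion[OF assms(1) H that])
  ultimately show ?thesis
    using assms(3,4,7) by (simp only: insert_subset ring_distribs sum_subtractf sum.distrib simp_thms)
qed

lemma linear_if_second_differences_vanish:
  fixes f :: "nat \<Rightarrow> 'a :: comm_ring_1"
  assumes "\<And>p. p + 2 \<le> n \<Longrightarrow> f (p + 2) - 2 * f (p + 1) + f p = 0"
  shows "p \<le> n \<Longrightarrow> f p = f 0 + (f 1 - f 0) * of_nat p"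
proof (induction p rule: induct_nat_012)
  case (ge2 p)
  then have "f (p + 2) = 2 * f (p + 1) - f p" using assms[of p] by (simp add: algebra_simps)
  then show ?case using ge2 by (simp add: algebra_simps)
qed simp_all

lemma eigenvalue_second_difference:
  assumes "finite V" and "local_op V E k R H"
    and eigen: "\<forall>p \<le> card V. \<forall>y \<subseteq> V. apply_op V H (Wstate V p) y = Ep p * Wstate V p y"
    and "u \<in> V" and "v \<in> V" and "u \<noteq> v" and "R \<le> gdist E u v"
    and "p + 2 \<le> card V"
  shows "Ep (p + 2) - 2 * Ep (p + 1) + Ep p = 0"
proof -
  have row: "sector_row_sum V H y = Ep (card y)" if "y \<subseteq> V" for y
  proof (rule sector_row_sum_eq_eigenvalue[OF assms(1) _ _ that refl])
    show "card y \<le> card V" using card_mono[OF assms(1) that] .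
    then show "\<forall>z \<subseteq> V. apply_op V H (Wstate V (card y)) z = Ep (card y) * Wstate V (card y) z"
      using eigen by blast
  qed
  have "p \<le> card (V - {u, v})" using assms(1,4-6,8) by (simp add: card_Diff_subset)
  then obtain y where "y \<subseteq> V - {u, v}" and "card y = p"
    using obtain_subset_with_card_n by metis
  then have y: "y \<subseteq> V" "u \<notin> y" "v \<notin> y" "finite y" using assms(1) finite_subset by auto
  have "sector_row_sum V H (insert u (insert v y)) = Ep (p + 2)"
    using row[of "insert u (insert v y)"] y assms(4-6) \<open>card y = p\<close> by simp
  moreover have "sector_row_sum V H (insert u y) = Ep (p + 1)"
    using row[of "insert u y"] y assms(4) \<open>card y = p\<close> by simp
  moreover have "sector_row_sum V H (insert v y) = Ep (p + 1)"
    using row[of "insert v y"] y assms(5) \<open>card y = p\<close> by simp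
  moreover have "sector_row_sum V H y = Ep p" using row[of y] y \<open>card y = p\<close> by simp
  ultimately have "Ep (p + 2) - Ep (p + 1) - Ep (p + 1) + Ep p = 0"
    using sector_row_sum_second_difference[OF assms(1,2,4-7) y(1-3)] by simp
  then show ?thesis by (metis mult_2 diff_diff_eq)
qed

theorem theorem2:
  fixes V :: "'a set" and E :: "'a \<Rightarrow> 'a \<Rightarrow> bool" and k R :: nat
    and H :: "'a set \<Rightarrow> 'a set \<Rightarrow> complex" and Ep :: "nat \<Rightarrow> complex"
  assumes "simple_graph V E" and "connected_graph V E"
    and "0 < k" and "0 < R"
    and "card V > 2 * k * (max_degree V E ^ (4 * R) + 1)"
    and "local_op V E k R H"
    and "\<forall>p \<le> card V. \<forall>y \<subseteq> V. apply_op V H (Wstate V p) y = Ep p * Wstate V p y"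
  shows "\<exists>\<Omega> \<omega> :: complex. \<forall>p \<le> card V. Ep p = \<Omega> + \<omega> * of_nat p"
proof -
  have fin: "finite V" using assms(1) unfolding simple_graph_def by blast
  have "2 * (max_degree V E ^ (4 * R) + 1) \<le> 2 * k * (max_degree V E ^ (4 * R) + 1)"
    using assms(3) by (intro mult_right_mono) auto
  then have large: "2 * (max_degree V E ^ (4 * R) + 1) < card V" using assms(5) by (rule le_less_trans)
  have "max_degree V E ^ R \<le> max_degree V E ^ (4 * R)"
    using assms(4) by (cases "max_degree V E = 0") (simp_all add: power_increasing zero_power)
  also have "\<dots> < 2 * (max_degree V E ^ (4 * R) + 1)" by simp
  finally have "max_degree V E ^ R < card V" using large by (rule less_trans)
  moreover have "2 < card V"
    using large by (rule le_less_trans[rotated]) simp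
  ultimately obtain u v where uv: "u \<in> V" "v \<in> V" "R \<le> gdist E u v"
    using exists_far_pair[OF assms(1,2)] by blast
  then have "u \<noteq> v" using assms(4) by auto
  have "Ep p = Ep 0 + (Ep 1 - Ep 0) * of_nat p" if "p \<le> card V" for p
    using linear_if_second_differences_vanish[OF eigenvalue_second_difference[OF fin assms(6,7)
        uv(1,2) \<open>u \<noteq> v\<close> uv(3)] that] .
  then show ?thesis by blast
qed

end
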